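(* Fix $m\in\mathbb{Z}^+$. Let $f,g\colon X\to \mathbb{Z}$ be functions on a finite set $X$. For $k\in\mathbb{Z}$ and $l\in\mathbb{Z}_{2m}$, let $W_k(l)=\{x\in X\colon kf(x)\equiv l \pmod{2m}\}$. If $$\sum_{x\in W_k(l)}g(x)=\sum_{x\in W_k(l+m)}g(x)\qquad\text{for every } l\in\mathbb{Z}_m$$ holds for $k=1$, then it holds for every odd integer $k$.
   Context: $\mathbb{Z}_m$ denotes the residues $\{0,1,\dots,m-1\}$. *)

theory Defs
  imports Main "HOL-Number_Theory.Cong"
begin

definition W :: "'a set \<Rightarrow> ('a \<Rightarrow> int) \<Rightarrow> int \<Rightarrow> int \<Rightarrow> int \<Rightarrow> 'a set" where
  "W X f m k l = {x \<in> X. [k * f x = l] (mod (2 * m))}"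

definition balanced :: "'a set \<Rightarrow> ('a \<Rightarrow> int) \<Rightarrow> ('a \<Rightarrow> int) \<Rightarrow> int \<Rightarrow> int \<Rightarrow> bool" where
  "balanced X f g m k \<longleftrightarrow>
     (\<forall>l \<in> {0..<m}. (\<Sum>x \<in> W X f m k l. g x) = (\<Sum>x \<in> W X f m k (l + m). g x))"

end

theory Submission
  imports Defs
begin

text \<open>Write \<open>S r\<close> for the sum of \<open>g\<close> over \<open>W\<^sub>1(r)\<close>. Splitting \<open>X\<close> by the residue of \<open>f\<close> modulo
  \<open>2m\<close> gives \<open>\<Sum>\<^bsub>W\<^sub>k(l)\<^esub> g = \<Sum> {S r | r mod 2m, k r \<equiv> l}\<close>. The hypothesis for \<open>k = 1\<close> says that
  \<open>S\<close> has period \<open>m\<close>, and for odd \<open>k\<close> we have \<open>k (r + m) \<equiv> k r + m (mod 2m)\<close>, so the shift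
  \<open>r \<mapsto> r + m\<close> carries the residues counted for \<open>l\<close> onto those counted for \<open>l + m\<close> without
  changing \<open>S\<close>.\<close>

lemma W_mod_right: "W X f m k (l mod (2 * m)) = W X f m k l"
  unfolding W_def by simp

lemma cong_odd_mult_add_half:
  fixes k m r l :: int
  assumes "odd k"
  shows "[k * (r + m) = l + m] (mod (2 * m)) \<longleftrightarrow> [k * r = l] (mod (2 * m))"
proof -
  obtain j where "k = 2 * j + 1"
    using assms by (rule oddE)
  then have "k * (r + m) = (k * r + m) + j * (2 * m)"
    by (simp add: algebra_simps)
  then have "[k * (r + m) = k * r + m] (mod (2 * m))"
    by (simp add: cong_def)
  then show ?thesis
    by (metis cong_add_rcancel cong_trans cong_sym)
qed

lemma sum_atLeastLessThan_shift_periodic: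
  fixes F :: "int \<Rightarrow> 'b::comm_monoid_add" and n c :: int
  assumes "n > 0" and periodic: "\<And>r. F (r mod n) = F r"
  shows "(\<Sum>r\<in>{0..<n}. F (r + c)) = (\<Sum>r\<in>{0..<n}. F r)"
proof -
  have "bij_betw (\<lambda>r. (r + c) mod n) {0..<n} {0..<n}"
    by (rule bij_betw_byWitness[where f' = "\<lambda>r. (r - c) mod n"])
       (use assms(1) in \<open>auto simp: mod_add_left_eq mod_diff_left_eq\<close>)
  then have "(\<Sum>r\<in>{0..<n}. F ((r + c) mod n)) = (\<Sum>r\<in>{0..<n}. F r)"
    by (rule sum.reindex_bij_betw)
  then show ?thesis
    by (simp add: periodic)
qed

lemma periodic_half_period:
  fixes F :: "int \<Rightarrow> 'b" and m r :: int
  assumes "m > 0" and periodic: "\<And>r. F (r mod (2 * m)) = F r"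
    and half: "\<And>l. l \<in> {0..<m} \<Longrightarrow> F l = F (l + m)"
  shows "F (r + m) = F r"
proof -
  define s where "s = r mod (2 * m)"
  have s: "0 \<le> s" "s < 2 * m"
    using assms(1) by (auto simp: s_def)
  have F_s: "F (s + c) = F (r + c)" for c
    by (metis periodic s_def mod_add_left_eq)
  show ?thesis
  proof (cases "s < m")
    case True
    have "F (r + m) = F (s + m)"
      by (rule F_s[symmetric])
    also have "\<dots> = F s"
      using half[of s] True s by simp
    also have "\<dots> = F r"
      using F_s[of 0] by simp
    finally show ?thesis .
  next
    case False
    have "F (r + m) = F (s - m + 2 * m)"
      using F_s[of m] by (simp add: algebra_simps)
    also have "\<dots> = F (s - m)"
      by (metis periodic mod_add_self2)
    also have "\<dots> = F s"
      using half[of "s - m"] False s by simp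
    also have "\<dots> = F r"
      using F_s[of 0] by simp
    finally show ?thesis .
  qed
qed

lemma sum_W_eq_sum_residues:
  assumes "m > 0" and "finite X"
  shows "(\<Sum>x\<in>W X f m k l. g x) =
    (\<Sum>r\<in>{0..<2 * m}. if [k * r = l] (mod (2 * m)) then \<Sum>x\<in>W X f m 1 r. g x else 0)"
proof -
  have fibre: "{x \<in> X. f x mod (2 * m) = r} = W X f m 1 r" if "r \<in> {0..<2 * m}" for r
    using that by (auto simp: W_def cong_def)
  have residue: "[k * f x = l] (mod (2 * m)) \<longleftrightarrow> [k * r = l] (mod (2 * m))"
    if "f x mod (2 * m) = r" for x r
    using that by (metis cong_def mod_mult_right_eq)
  have "(\<Sum>x\<in>W X f m k l. g x) = (\<Sum>x\<in>X. if [k * f x = l] (mod (2 * m)) then g x else 0)"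
    unfolding W_def using assms(2) by (rule sum.inter_filter)
  also have "\<dots> = (\<Sum>r\<in>{0..<2 * m}. \<Sum>x\<in>{x \<in> X. f x mod (2 * m) = r}.
                    if [k * f x = l] (mod (2 * m)) then g x else 0)"
    by (rule sum.group[symmetric]) (use assms in auto)
  also have "\<dots> = (\<Sum>r\<in>{0..<2 * m}. \<Sum>x\<in>{x \<in> X. f x mod (2 * m) = r}.
                    if [k * r = l] (mod (2 * m)) then g x else 0)"
    by (intro sum.cong refl) (metis (mono_tags, lifting) mem_Collect_eq residue)
  also have "\<dots> = (\<Sum>r\<in>{0..<2 * m}. if [k * r = l] (mod (2 * m)) then \<Sum>x\<in>W X f m 1 r. g x else 0)"
    by (rule sum.cong) (auto simp: fibre)
  finally show ?thesis .
qed

theorem lemma4p6: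
  fixes X :: "'a set" and f g :: "'a \<Rightarrow> int" and m k :: int
  assumes "m > 0" and "finite X"
    and "balanced X f g m 1"
    and "odd k"
  shows "balanced X f g m k"
  unfolding balanced_def
proof
  fix l
  define S where "S r = (\<Sum>x\<in>W X f m 1 r. g x)" for r
  define F where "F l' r = (if [k * r = l'] (mod (2 * m)) then S r else 0)" for l' r
  have S_mod: "S (r mod (2 * m)) = S r" for r
    by (simp add: S_def W_mod_right)
  have S_shift: "S (r + m) = S r" for r
    by (rule periodic_half_period[where F = S, OF assms(1) S_mod])
       (use assms(3) in \<open>simp add: balanced_def S_def\<close>)
  have F_mod: "F l' (r mod (2 * m)) = F l' r" for l' r
    by (simp add: F_def S_mod cong_def mod_mult_right_eq)
  have "(\<Sum>x\<in>W X f m k (l + m). g x) = (\<Sum>r\<in>{0..<2 * m}. F (l + m) r)"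
    unfolding F_def S_def by (rule sum_W_eq_sum_residues[OF assms(1,2)])
  also have "\<dots> = (\<Sum>r\<in>{0..<2 * m}. F (l + m) (r + m))"
    by (rule sum_atLeastLessThan_shift_periodic[symmetric]) (use assms(1) F_mod in auto)
  also have "\<dots> = (\<Sum>r\<in>{0..<2 * m}. F l r)"
    by (simp only: F_def S_shift cong_odd_mult_add_half[OF assms(4)])
  also have "\<dots> = (\<Sum>x\<in>W X f m k l. g x)"
    unfolding F_def S_def by (rule sum_W_eq_sum_residues[OF assms(1,2), symmetric])
  finally show "(\<Sum>x\<in>W X f m k l. g x) = (\<Sum>x\<in>W X f m k (l + m). g x)"
    by simp
qed

end
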